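(* Assume $\mathbb{E}\min(Z,W)=\infty$ and $\sum_{n\ge0} r_n^2<\infty$. Then $\Lambda_n\to\infty$ in probability as $n\to\infty$.
   Context: Let $Z,W,(Z_n)_{n\ge1},(W_n)_{n\ge1}$ be independent, identically distributed random variables taking values in $\mathbb{N}=\{1,2,3,\dots\}$. Define sets $T_n\subset\mathbb{Z}$ recursively by $T_n=\{n\}$ for $n\le 0$ and $T_n=\{n\}\cup T_{n-Z_n}\cup T_{n-W_n}$ for $n\ge1$. Let $\mathcal{L}_n=T_n\cap\{0,-1,-2,\dots\}$ and $\Lambda_n=|\mathcal{L}_n|$. Define the $Z$-chain $T^Z_n=\{n\}$ for $n\le0$ and $T^Z_n=\{n\}\cup T^Z_{n-Z_n}$ for $n\ge1$. Let $r_0=1$ and $r_n=\mathbb{P}(0\in T^Z_n)$ for $n\ge1$; equivalently $r_n=\sum_{i=1}^n q_i r_{n-i}$ with $q_i=\mathbb{P}(Z=i)$. *)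

theory Defs
  imports "HOL-Probability.Probability"
begin

text \<open>Given realisations z, w of the
sequences (Z_n), (W_n) (values at indices n >= 1 are used), the set
T_n is defined by T_n = {n} for n <= 0 and
T_n = {n} \<union> T_(n - z n) \<union> T_(n - w n) for n >= 1.
We define it as the least set closed under these rules; since z n, w n >= 1
this is exactly the recursive definition.\<close>

inductive inT :: "(nat \<Rightarrow> nat) \<Rightarrow> (nat \<Rightarrow> nat) \<Rightarrow> int \<Rightarrow> int \<Rightarrow> bool"
  for z w :: "nat \<Rightarrow> nat" where
  self: "inT z w n n"
| viaZ: "n \<ge> 1 \<Longrightarrow> inT z w (n - int (z (nat n))) m \<Longrightarrow> inT z w n m"
| viaW: "n \<ge> 1 \<Longrightarrow> inT z w (n - int (w (nat n))) m \<Longrightarrow> inT z w n m"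

definition Tset :: "(nat \<Rightarrow> nat) \<Rightarrow> (nat \<Rightarrow> nat) \<Rightarrow> int \<Rightarrow> int set" where
  "Tset z w n = {m. inT z w n m}"

definition Lambda :: "(nat \<Rightarrow> nat) \<Rightarrow> (nat \<Rightarrow> nat) \<Rightarrow> int \<Rightarrow> nat" where
  "Lambda z w n = card (Tset z w n \<inter> {..0})"

inductive inTZ :: "(nat \<Rightarrow> nat) \<Rightarrow> int \<Rightarrow> int \<Rightarrow> bool"
  for z :: "nat \<Rightarrow> nat" where
  self: "inTZ z n n"
| viaZ: "n \<ge> 1 \<Longrightarrow> inTZ z (n - int (z (nat n))) m \<Longrightarrow> inTZ z n m"

definition TZset :: "(nat \<Rightarrow> nat) \<Rightarrow> int \<Rightarrow> int set" where
  "TZset z n = {m. inTZ z n m}"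

end

(*
  Fix K.  Follow the Z-walk from n for K*D steps.  Its jumps are a.s. finite, so with high
  probability none of these jumps is large and the walk stays above a level A; let
  s_0 > s_1 > ... > s_K be its positions after 0, D, ..., K*D steps.  From each s_i the W-walk
  descends to a landing site <= 0 which belongs to T_n.  Two of these W-walks land at the same
  site only if they meet, and cutting them at their first meeting point leaves two paths
  through disjoint sites, independent of each other and of the Z-path.  So a meeting of the
  walks from s_i and s_j has probability at most  sum_m u(s_i, m) u(s_j, m),  where u(a, m) is
  the probability that a Z-walk from a visits m, equal to r_(a - m) for m >= 0.  For s_j >= A
  and s_i - s_j >= D this sum is small: on sites m >= 1 because sum_k r_k^2 < oo forces
  sum_i r_(i + d) r_i -> 0 as d -> oo, and on landing sites m <= 0 because a walk started high
  lands at any given site with small probability.  Hence Lambda_n > K with probability close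
  to 1 for all large n.
*)

theory Submission
  imports Defs
begin

section \<open>Jump paths and walks\<close>

(* A path from a is the list of its jump sizes; jumps are made only from sites >= 1. *)
fun jump_path :: "int \<Rightarrow> nat list \<Rightarrow> bool" where
  "jump_path a [] = True"
| "jump_path a (j # js) = (1 \<le> a \<and> 1 \<le> j \<and> jump_path (a - int j) js)"

definition path_end :: "int \<Rightarrow> nat list \<Rightarrow> int" where
  "path_end a js = a - int (sum_list js)"

fun path_sites :: "int \<Rightarrow> nat list \<Rightarrow> int set" where
  "path_sites a [] = {}"
| "path_sites a (j # js) = insert a (path_sites (a - int j) js)"

fun follows :: "(nat \<Rightarrow> nat) \<Rightarrow> int \<Rightarrow> nat list \<Rightarrow> bool" where
  "follows z a [] = True"
| "follows z a (j # js) = (z (nat a) = j \<and> follows z (a - int j) js)"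

primrec walk :: "(nat \<Rightarrow> nat) \<Rightarrow> int \<Rightarrow> nat \<Rightarrow> int" where
  "walk z a 0 = a"
| "walk z a (Suc k) = (if 1 \<le> a then walk z (a - int (z (nat a))) k else a)"

primrec walk_path :: "(nat \<Rightarrow> nat) \<Rightarrow> int \<Rightarrow> nat \<Rightarrow> nat list" where
  "walk_path z a 0 = []"
| "walk_path z a (Suc k) = (if 1 \<le> a then z (nat a) # walk_path z (a - int (z (nat a))) k else [])"

lemma path_end_Nil [simp]: "path_end a [] = a"
  and path_end_Cons [simp]: "path_end a (j # js) = path_end (a - int j) js"
  by (simp_all add: path_end_def)

lemma path_end_append: "path_end a (xs @ ys) = path_end (path_end a xs) ys"
  by (simp add: path_end_def)

lemma jump_path_append: "jump_path a (xs @ ys) \<longleftrightarrow> jump_path a xs \<and> jump_path (path_end a xs) ys"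
  by (induction xs arbitrary: a) auto

lemma jump_path_length_le: "jump_path a js \<Longrightarrow> length js \<le> sum_list js"
  by (induction js arbitrary: a) fastforce+

lemma jump_path_end_le: "jump_path a js \<Longrightarrow> path_end a js + int (length js) \<le> a"
  using jump_path_length_le[of a js] by (simp add: path_end_def)

lemma jump_path_sites:
  "jump_path a js \<Longrightarrow> x \<in> path_sites a js \<Longrightarrow> path_end a js < x \<and> x \<le> a \<and> 1 \<le> x"
proof (induction js arbitrary: a)
  case (Cons j js)
  then have "1 \<le> a" "1 \<le> int j" "jump_path (a - int j) js" by auto
  then show ?case
    using Cons.IH[of "a - int j"] Cons.prems jump_path_end_le[of "a - int j" js]
    by (cases "x = a") auto
qed auto

lemma path_end_take_gap:
  assumes "jump_path a js" "k \<le> length js"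
  shows "path_end a js + int (length js - k) \<le> path_end a (take k js)"
proof -
  have "jump_path (path_end a (take k js)) (drop k js)"
    using assms(1) jump_path_append[of a "take k js" "drop k js"] by simp
  then show ?thesis
    using jump_path_end_le path_end_append[of a "take k js" "drop k js"] assms(2) by fastforce
qed

lemma follows_prefix:
  "jump_path a xs \<Longrightarrow> jump_path a ys \<Longrightarrow> follows z a xs \<Longrightarrow> follows z a ys \<Longrightarrow>
    (\<exists>t. ys = xs @ t) \<or> (\<exists>t. xs = ys @ t)"
proof (induction xs arbitrary: a ys)
  case (Cons j xs)
  then show ?case by (cases ys) auto
qed auto

lemma follows_same_length:
  "jump_path a xs \<Longrightarrow> jump_path a ys \<Longrightarrow> follows z a xs \<Longrightarrow> follows z a ys \<Longrightarrow>
    length xs = length ys \<Longrightarrow> xs = ys"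
  using follows_prefix by fastforce

lemma follows_landing:
  assumes "jump_path a xs" "jump_path a ys" "follows z a xs" "follows z a ys"
    and "path_end a xs \<le> 0" "path_end a ys \<le> 0"
  shows "xs = ys"
proof -
  have no_ext: "t = []" if "jump_path a (us @ t)" "path_end a us \<le> 0" for us t
    using that by (cases t) (auto simp: jump_path_append)
  from follows_prefix[OF assms(1-4)] show ?thesis
    using no_ext assms by fastforce
qed

lemma finite_jump_paths_above: "finite {js. jump_path a js \<and> c \<le> path_end a js}"
proof -
  let ?n = "nat (a - c)"
  have "{js. jump_path a js \<and> c \<le> path_end a js} \<subseteq> {js. set js \<subseteq> {..?n} \<and> length js \<le> ?n}"
  proof clarify
    fix js assume js: "jump_path a js" "c \<le> path_end a js"
    then have s: "int (sum_list js) \<le> a - c" by (simp add: path_end_def)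
    have "length js \<le> ?n" using jump_path_length_le[OF js(1)] s by linarith
    moreover have "sum_list js \<le> ?n" using s by linarith
    then have "set js \<subseteq> {..?n}" by (auto dest: member_le_sum_list)
    ultimately show "set js \<subseteq> {..?n} \<and> length js \<le> ?n" by blast
  qed
  then show ?thesis
    using finite_lists_length_le[of "{..?n}" ?n] finite_subset by blast
qed

lemma finite_jump_paths_to: "finite {js. jump_path a js \<and> path_end a js = m}"
  by (rule finite_subset[OF _ finite_jump_paths_above[of a m]]) auto

lemma jump_path_to_shift:
  "0 \<le> m \<Longrightarrow> jump_path a js \<and> path_end a js = m \<longleftrightarrow> jump_path (a - m) js \<and> path_end (a - m) js = 0"
proof (induction js arbitrary: a)
  case (Cons j js)
  have IH: "jump_path (a - int j) js \<and> path_end (a - int j) js = m \<longleftrightarrow>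
      jump_path (a - m - int j) js \<and> path_end (a - m - int j) js = 0"
    using Cons by (simp add: algebra_simps)
  have "m \<le> a - int j" if "jump_path (a - int j) js" "path_end (a - int j) js = m"
    using that jump_path_end_le[of "a - int j" js] by simp
  then show ?case using IH Cons.prems by auto
qed auto

lemma jump_path_last_jump:
  assumes "1 \<le> b" "m \<le> 0" "jump_path b js" "path_end b js = m"
  obtains k js' where "js = js' @ [nat (k - m)]" "1 \<le> k" "k \<le> b"
    "jump_path b js'" "path_end b js' = k"
proof -
  have "js \<noteq> []" using assms by auto
  then obtain js' j where js: "js = js' @ [j]" by (metis rev_exhaust)
  define k where "k = path_end b js'"
  have "jump_path b js'" "jump_path k [j]" "path_end k [j] = m"
    using assms(3,4) js by (auto simp: jump_path_append path_end_append k_def)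
  with jump_path_end_le[of b js'] show ?thesis
    using that js k_def by force
qed

lemma walk_Suc:
  "walk z a (Suc k) =
    (if 1 \<le> walk z a k then walk z a k - int (z (nat (walk z a k))) else walk z a k)"
proof (induction k arbitrary: a)
  case (Suc k)
  then show ?case by (cases "1 \<le> a") (simp_all only: walk.simps, simp_all)
qed simp

lemma walk_antimono: "k \<le> k' \<Longrightarrow> walk z a k' \<le> walk z a k"
proof (induction k' rule: dec_induct)
  case (step k')
  then show ?case using walk_Suc[of z a k'] by simp
qed simp

lemma walk_lands:
  assumes "\<forall>i. 1 \<le> z i"
  shows "walk z a (nat a + 1) \<le> 0"
proof -
  have "walk z a k \<le> 0 \<or> walk z a k \<le> a - int k" for k
  proof (induction k)
    case (Suc k)
    have "1 \<le> z (nat (walk z a k))" using assms by blast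
    then show ?case using Suc walk_Suc[of z a k] by auto
  qed simp
  from this[of "nat a + 1"] show ?thesis by auto
qed

lemma jump_path_walk_path: "\<forall>i. 1 \<le> z i \<Longrightarrow> jump_path a (walk_path z a k)"
  by (induction k arbitrary: a) auto

lemma path_end_walk_path [simp]: "path_end a (walk_path z a k) = walk z a k"
  by (induction k arbitrary: a) auto

lemma follows_walk_path: "follows z a (walk_path z a k)"
  by (induction k arbitrary: a) auto

lemma path_sites_walk_path: "x \<in> path_sites a (walk_path z a k) \<Longrightarrow> \<exists>k' < k. x = walk z a k'"
proof (induction k arbitrary: a)
  case (Suc k)
  show ?case
  proof (cases "x = a")
    case True
    then show ?thesis by (intro exI[of _ 0]) auto
  next
    case False
    with Suc.prems have "1 \<le> a" "x \<in> path_sites (a - int (z (nat a))) (walk_path z (a - int (z (nat a))) k)"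
      by (auto split: if_splits)
    with Suc.IH obtain k' where "k' < k" "x = walk z (a - int (z (nat a))) k'" by blast
    with \<open>1 \<le> a\<close> show ?thesis by (intro exI[of _ "Suc k'"]) auto
  qed
qed simp

lemma length_walk_path: "\<forall>k' < k. 1 \<le> walk z a k' \<Longrightarrow> length (walk_path z a k) = k"
proof (induction k arbitrary: a)
  case (Suc k)
  from Suc.prems have a: "1 \<le> a" by (metis walk.simps(1) zero_less_Suc)
  have "\<forall>k' < k. 1 \<le> walk z (a - int (z (nat a))) k'"
    using Suc.prems a by (metis Suc_mono walk.simps(2))
  with Suc.IH a show ?case by simp
qed simp

lemma take_walk_path: "k \<le> k' \<Longrightarrow> take k (walk_path z a k') = walk_path z a k"
proof (induction k arbitrary: a k')
  case (Suc k)
  then show ?case by (cases k') auto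
qed simp

lemma walks_first_meeting:
  assumes "walk w a i = walk w b j"
  obtains i0 j0 where "walk w a i0 = walk w b j0"
    "path_sites a (walk_path w a i0) \<inter> path_sites b (walk_path w b j0) = {}"
proof -
  define P where "P i \<longleftrightarrow> (\<exists>j. walk w a i = walk w b j)" for i
  define i0 where "i0 = (LEAST i. P i)"
  have "P i0" unfolding i0_def by (rule LeastI[of P i]) (use assms P_def in auto)
  then obtain j0 where j0: "walk w a i0 = walk w b j0" unfolding P_def by auto
  have "path_sites a (walk_path w a i0) \<inter> path_sites b (walk_path w b j0) = {}"
  proof (rule ccontr)
    assume "path_sites a (walk_path w a i0) \<inter> path_sites b (walk_path w b j0) \<noteq> {}"
    then obtain k1 k2 where "k1 < i0" "walk w a k1 = walk w b k2"
      using path_sites_walk_path by (metis disjoint_iff)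
    then show False using not_less_Least[of k1 P] unfolding i0_def P_def by blast
  qed
  with j0 that show ?thesis by blast
qed

lemma inTZ_iff_walk: "inTZ z a m \<longleftrightarrow> (\<exists>k. walk z a k = m)"
proof
  show "inTZ z a m \<Longrightarrow> \<exists>k. walk z a k = m"
  proof (induction rule: inTZ.induct)
    case (self n)
    then show ?case using walk.simps(1) by blast
  next
    case (viaZ n m)
    then obtain k where "walk z (n - int (z (nat n))) k = m" by auto
    with viaZ show ?case by (metis walk.simps(2))
  qed
  have "inTZ z a (walk z a k)" for k
    by (induction k arbitrary: a) (auto intro: inTZ.intros)
  then show "\<exists>k. walk z a k = m \<Longrightarrow> inTZ z a m" by blast
qed

lemma inTZ_follows: "jump_path a js \<Longrightarrow> follows z a js \<Longrightarrow> inTZ z a (path_end a js)"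
  by (induction js arbitrary: a) (auto intro: inTZ.intros)

lemma inT_if_inTZ_W: "inTZ w s m \<Longrightarrow> inT z w s m"
  by (induction rule: inTZ.induct) (auto intro: inT.intros)

lemma inT_if_inTZ_Z: "inTZ z n s \<Longrightarrow> inT z w s m \<Longrightarrow> inT z w n m"
  by (induction rule: inTZ.induct) (auto intro: inT.intros)

lemma finite_Tset:
  assumes "\<forall>i. 1 \<le> z i" "\<forall>i. 1 \<le> w i"
  shows "finite (Tset z w n)"
proof (induction "nat n" arbitrary: n rule: less_induct)
  case less
  show ?case
  proof (cases "1 \<le> n")
    case False
    then have "Tset z w n \<subseteq> {n}" by (auto simp: Tset_def elim: inT.cases)
    then show ?thesis using finite_subset by blast
  next
    case True
    have "Tset z w n \<subseteq> insert n (Tset z w (n - int (z (nat n))) \<union> Tset z w (n - int (w (nat n))))"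
      by (auto simp: Tset_def elim: inT.cases)
    moreover have "1 \<le> z (nat n)" "1 \<le> w (nat n)" using assms by auto
    then have "nat (n - int (z (nat n))) < nat n" "nat (n - int (w (nat n))) < nat n"
      using True by auto
    then have "finite (Tset z w (n - int (z (nat n))))" "finite (Tset z w (n - int (w (nat n))))"
      using less by auto
    ultimately show ?thesis using finite_subset by blast
  qed
qed

definition paths_from :: "int \<Rightarrow> int \<Rightarrow> nat \<Rightarrow> nat list set" where
  "paths_from n c l = {zs. length zs = l \<and> jump_path n zs \<and> c \<le> path_end n zs}"

definition meeting_pairs :: "int \<Rightarrow> int \<Rightarrow> int \<Rightarrow> (nat list \<times> nat list) set" where
  "meeting_pairs a b m = {(xs, ys). jump_path a xs \<and> path_end a xs = m \<and>
     jump_path b ys \<and> path_end b ys = m \<and> path_sites a xs \<inter> path_sites b ys = {}}"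

lemma finite_paths_from: "finite (paths_from n c l)"
  unfolding paths_from_def by (rule finite_subset[OF _ finite_jump_paths_above[of n c]]) auto

lemma finite_meeting_pairs: "finite (meeting_pairs a b m)"
  by (rule finite_subset[of _ "{xs. jump_path a xs \<and> path_end a xs = m} \<times> {ys. jump_path b ys \<and> path_end b ys = m}"])
     (auto simp: meeting_pairs_def finite_jump_paths_to)

(* The pairs (site, value) that the walk from a along js forces on the variables X,
   where b selects the Z-variables (True) or the W-variables (False). *)
fun path_constraints :: "bool \<Rightarrow> int \<Rightarrow> nat list \<Rightarrow> ((bool \<times> nat) \<times> nat) set" where
  "path_constraints b a [] = {}"
| "path_constraints b a (j # js) = insert ((b, nat a), j) (path_constraints b (a - int j) js)"

lemma finite_path_constraints [simp]: "finite (path_constraints b a js)"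
  by (induction js arbitrary: a) auto

lemma Domain_path_constraints: "Domain (path_constraints b a js) = (\<lambda>x. (b, nat x)) ` path_sites a js"
  by (induction js arbitrary: a) auto

lemma path_constraints_notin:
  assumes "jump_path a (j # js)"
  shows "((b, nat a), v) \<notin> path_constraints b (a - int j) js"
proof
  assume "((b, nat a), v) \<in> path_constraints b (a - int j) js"
  then have "(b, nat a) \<in> Domain (path_constraints b (a - int j) js)" by blast
  then obtain x where "x \<in> path_sites (a - int j) js" "nat a = nat x"
    unfolding Domain_path_constraints by auto
  with assms jump_path_sites[of "a - int j" js x] show False by auto
qed

lemma single_valued_path_constraints: "jump_path a js \<Longrightarrow> single_valued (path_constraints b a js)"
proof (induction js arbitrary: a)
  case (Cons j js)
  then show ?case
    using path_constraints_notin[OF Cons.prems] by (auto simp: single_valued_def)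
qed simp

lemma single_valued_Un:
  "single_valued A \<Longrightarrow> single_valued B \<Longrightarrow> Domain A \<inter> Domain B = {} \<Longrightarrow> single_valued (A \<union> B)"
  unfolding single_valued_def by blast

section \<open>Square-summable sequences\<close>

lemma summable_square_tendsto_0:
  fixes f :: "nat \<Rightarrow> real"
  assumes "summable (\<lambda>k. f k ^ 2)"
  shows "f \<longlonglongrightarrow> 0"
proof -
  have "(\<lambda>k. sqrt (f k ^ 2)) \<longlonglongrightarrow> sqrt 0"
    by (rule tendsto_real_sqrt[OF summable_LIMSEQ_zero[OF assms]])
  then show ?thesis by (simp add: tendsto_rabs_zero_iff)
qed

lemma summable_finite_tail_sums_small:
  fixes f :: "nat \<Rightarrow> real"
  assumes "summable f" "\<And>k. 0 \<le> f k" "0 < e"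
  obtains N where "\<And>F. finite F \<Longrightarrow> F \<subseteq> {N..} \<Longrightarrow> sum f F \<le> e"
proof -
  obtain N where N: "\<And>m n. N \<le> m \<Longrightarrow> norm (\<Sum>k=m..n. f k) < e"
    using summable_partial_sum_bound[OF assms(1,3)] by blast
  have "sum f F \<le> e" if "finite F" "F \<subseteq> {N..}" for F
  proof -
    have "sum f F \<le> (\<Sum>k=N..Max F. f k)"
      using that assms(2) by (intro sum_mono2) (auto simp: Max_ge_iff)
    also have "\<dots> \<le> e" using N[of N "Max F"] by simp
    finally show ?thesis .
  qed
  then show ?thesis using that by blast
qed

(* 2 r(i + d) r(i) <= r(i + d)^2 + r(i)^2 bounds the terms with i >= N by two tails of the
   convergent series of the r(k)^2; the finitely many terms with i < N are small since
   r(i + d) -> 0 as d -> oo. *)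
lemma shifted_products_small:
  fixes r :: "nat \<Rightarrow> real"
  assumes sq: "summable (\<lambda>k. r k ^ 2)" and r01: "\<And>k. 0 \<le> r k" "\<And>k. r k \<le> 1" and e: "0 < e"
  obtains D where "\<And>d I. D \<le> d \<Longrightarrow> finite I \<Longrightarrow> (\<Sum>i\<in>I. r (i + d) * r i) \<le> e"
proof -
  define e' where "e' = e / 3"
  have e': "0 < e'" using e by (simp add: e'_def)
  obtain N0 where tail: "\<And>F. finite F \<Longrightarrow> F \<subseteq> {N0..} \<Longrightarrow> (\<Sum>k\<in>F. r k ^ 2) \<le> e'"
    using summable_finite_tail_sums_small[of "\<lambda>k. r k ^ 2" e'] sq e' by auto
  define N where "N = Suc N0"
  have "\<forall>\<^sub>F k in sequentially. r k < e' / real N"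
    using summable_square_tendsto_0[OF sq] e' by (intro order_tendstoD(2)) (auto simp: N_def)
  then obtain D where D: "\<And>k. D \<le> k \<Longrightarrow> r k \<le> e' / real N"
    unfolding eventually_sequentially by (meson less_imp_le)
  have "(\<Sum>i\<in>I. r (i + d) * r i) \<le> e" if "D \<le> d" "finite I" for d I
  proof -
    have "(\<Sum>i\<in>I \<inter> {..<N}. r (i + d) * r i) \<le> (\<Sum>i\<in>I \<inter> {..<N}. e' / real N)"
      using D[of "_ + d"] that(1) r01 by (intro sum_mono) (meson le_add2 mult_left_le order_trans)
    also have "\<dots> \<le> (\<Sum>i\<in>{..<N}. e' / real N)"
      using e' by (intro sum_mono2) auto
    also have "\<dots> = e'" by (simp add: N_def)
    finally have head: "(\<Sum>i\<in>I \<inter> {..<N}. r (i + d) * r i) \<le> e'" .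
    have "(\<Sum>i\<in>I - {..<N}. r (i + d) * r i) \<le> (\<Sum>i\<in>I - {..<N}. r (i + d) ^ 2 + r i ^ 2)"
    proof (rule sum_mono)
      show "r (i + d) * r i \<le> r (i + d) ^ 2 + r i ^ 2" for i
        using mult_nonneg_nonneg[OF r01(1) r01(1), of "i + d" i] sum_squares_bound[of "r (i + d)" "r i"]
        unfolding power2_eq_square by linarith
    qed
    also have "\<dots> = (\<Sum>k\<in>(\<lambda>i. i + d) ` (I - {..<N}). r k ^ 2) + (\<Sum>i\<in>I - {..<N}. r i ^ 2)"
      by (simp add: sum.distrib sum.reindex)
    also have "\<dots> \<le> e' + e'"
      using that(2) by (intro add_mono tail) (auto simp: N_def)
    finally have "(\<Sum>i\<in>I - {..<N}. r (i + d) * r i) \<le> 2 * e'" by simp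
    with head show ?thesis
      using sum.Int_Diff[OF that(2), of "\<lambda>i. r (i + d) * r i" "{..<N}"] by (simp add: e'_def)
  qed
  then show ?thesis using that by blast
qed

section \<open>Cylinder events of the jump variables\<close>

locale iid_jumps =
  fixes M :: "'a measure" and Zs Ws :: "nat \<Rightarrow> 'a \<Rightarrow> nat"
  assumes P: "prob_space M"
    and indep: "prob_space.indep_vars M (\<lambda>_. count_space UNIV)
                  (\<lambda>(b, i). if b then Zs i else Ws i) (UNIV :: (bool \<times> nat) set)"
    and distZ: "\<And>i. distr M (count_space UNIV) (Zs i) = distr M (count_space UNIV) (Zs 0)"
    and distW: "\<And>i. distr M (count_space UNIV) (Ws i) = distr M (count_space UNIV) (Zs 0)"
    and posZ: "\<And>i \<omega>. Zs i \<omega> \<ge> 1"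
    and posW: "\<And>i \<omega>. Ws i \<omega> \<ge> 1"
begin

sublocale prob_space M by (rule P)

definition X :: "bool \<times> nat \<Rightarrow> 'a \<Rightarrow> nat" where
  "X = (\<lambda>(b, i). if b then Zs i else Ws i)"

definition Q :: "nat set \<Rightarrow> real" where
  "Q B = prob {\<omega> \<in> space M. Zs 0 \<omega> \<in> B}"

definition q :: "nat \<Rightarrow> real" where
  "q v = Q {v}"

definition cylinder :: "((bool \<times> nat) \<times> nat) set \<Rightarrow> 'a set" where
  "cylinder A = {\<omega> \<in> space M. \<forall>p\<in>A. X (fst p) \<omega> = snd p}"

definition path_weight :: "nat list \<Rightarrow> real" where
  "path_weight js = prod_list (map q js)"

(* The probability that the Z-walk from a visits m; for m <= 0, that it lands at m. *)
definition visit_prob :: "int \<Rightarrow> int \<Rightarrow> real" where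
  "visit_prob a m = (\<Sum>js | jump_path a js \<and> path_end a js = m. path_weight js)"

definition r :: "nat \<Rightarrow> real" where
  "r k = prob {\<omega> \<in> space M. 0 \<in> TZset (\<lambda>i. Zs i \<omega>) (int k)}"

lemma X_simps [simp]: "X (True, i) = Zs i" "X (False, i) = Ws i"
  by (simp_all add: X_def)

lemma indep_X: "indep_vars (\<lambda>_. count_space UNIV) X UNIV"
  using indep unfolding X_def by simp

lemma measurable_X: "X s \<in> measurable M (count_space UNIV)"
  using indep_X unfolding indep_vars_def by blast

lemma sets_X: "{\<omega> \<in> space M. X s \<omega> \<in> B} \<in> sets M"
  using measurable_X[of s] by (simp add: measurable_count_space_eq2)

lemma prob_X: "prob {\<omega> \<in> space M. X s \<omega> \<in> B} = Q B"
proof -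
  have "distr M (count_space UNIV) (X s) = distr M (count_space UNIV) (Zs 0)"
    using distZ distW by (cases s) (auto simp: X_def)
  then have "prob (X s -` B \<inter> space M) = prob (Zs 0 -` B \<inter> space M)"
    using measurable_X[of s] measurable_X[of "(True, 0)"]
    by (metis X_simps(1) measure_distr sets_count_space UNIV_I Pow_UNIV)
  moreover have "{\<omega> \<in> space M. f \<omega> \<in> B} = f -` B \<inter> space M" for f :: "'a \<Rightarrow> nat"
    by auto
  ultimately show ?thesis unfolding Q_def by simp
qed

lemma prob_X_all:
  assumes "finite J"
  shows "prob {\<omega> \<in> space M. \<forall>s\<in>J. X s \<omega> \<in> B s} = (\<Prod>s\<in>J. Q (B s))"
proof (cases "J = {}")
  case False
  have "prob (\<Inter>s\<in>J. X s -` B s \<inter> space M) = (\<Prod>s\<in>J. prob (X s -` B s \<inter> space M))"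
    by (rule indep_varsD[OF indep_X False assms]) auto
  moreover have "(\<Inter>s\<in>J. X s -` B s \<inter> space M) = {\<omega> \<in> space M. \<forall>s\<in>J. X s \<omega> \<in> B s}"
    using False by auto
  moreover have "X s -` B s \<inter> space M = {\<omega> \<in> space M. X s \<omega> \<in> B s}" for s
    by auto
  ultimately show ?thesis using prob_X by simp
qed (simp add: prob_space)

lemma sets_cylinder: "finite A \<Longrightarrow> cylinder A \<in> sets M"
  unfolding cylinder_def
proof (rule sets.sets_Collect_finite_All)
  show "{\<omega> \<in> space M. X (fst p) \<omega> = snd p} \<in> sets M" for p
    using sets_X[of "fst p" "{snd p}"] by simp
qed

lemma cylinder_Un: "cylinder (A \<union> B) = cylinder A \<inter> cylinder B"
  unfolding cylinder_def by auto

lemma cylinder_eq_X_all: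
  assumes "single_valued A"
  shows "cylinder A = {\<omega> \<in> space M. \<forall>s\<in>Domain A. X s \<omega> \<in> A `` {s}}"
proof -
  have "(\<forall>p\<in>A. X (fst p) \<omega> = snd p) \<longleftrightarrow> (\<forall>s\<in>Domain A. X s \<omega> \<in> A `` {s})" for \<omega>
  proof
    assume "\<forall>p\<in>A. X (fst p) \<omega> = snd p"
    then show "\<forall>s\<in>Domain A. X s \<omega> \<in> A `` {s}" by force
  next
    assume h: "\<forall>s\<in>Domain A. X s \<omega> \<in> A `` {s}"
    show "\<forall>p\<in>A. X (fst p) \<omega> = snd p"
    proof
      fix p assume p: "p \<in> A"
      then have "fst p \<in> Domain A" by (simp add: Domain_fst)
      with h have "(fst p, X (fst p) \<omega>) \<in> A" by blast
      with p assms show "X (fst p) \<omega> = snd p"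
        using single_valuedD[of A "fst p" "snd p"] by simp
    qed
  qed
  then show ?thesis unfolding cylinder_def by blast
qed

lemma prod_Domain_Q:
  assumes "single_valued A" "finite A"
  shows "(\<Prod>s\<in>Domain A. Q (A `` {s})) = (\<Prod>p\<in>A. q (snd p))"
proof -
  have inj: "inj_on fst A"
    using assms(1) unfolding single_valued_def inj_on_def by (metis prod.collapse)
  have "A `` {fst p} = {snd p}" if "p \<in> A" for p
    using that assms(1) unfolding single_valued_def by force
  then show ?thesis
    unfolding Domain_fst q_def by (simp add: prod.reindex[OF inj])
qed

lemma prob_cylinder:
  assumes "finite A" "single_valued A"
  shows "prob (cylinder A) = (\<Prod>p\<in>A. q (snd p))"
  using prob_X_all[of "Domain A" "\<lambda>s. A `` {s}"] prod_Domain_Q[OF assms(2,1)] assms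
  by (simp add: cylinder_eq_X_all finite_Domain)

lemma prob_cylinder_X:
  assumes "finite A" "single_valued A" "s0 \<notin> Domain A"
  shows "prob (cylinder A \<inter> {\<omega> \<in> space M. X s0 \<omega> \<in> B}) = (\<Prod>p\<in>A. q (snd p)) * Q B"
proof -
  define BB where "BB s = (if s = s0 then B else A `` {s})" for s
  have BB: "BB s0 = B" "\<And>s. s \<in> Domain A \<Longrightarrow> BB s = A `` {s}"
    using assms(3) by (auto simp: BB_def)
  have "cylinder A \<inter> {\<omega> \<in> space M. X s0 \<omega> \<in> B} =
      {\<omega> \<in> space M. \<forall>s\<in>insert s0 (Domain A). X s \<omega> \<in> BB s}"
    unfolding cylinder_eq_X_all[OF assms(2)] using BB by auto
  then have "prob (cylinder A \<inter> {\<omega> \<in> space M. X s0 \<omega> \<in> B}) = (\<Prod>s\<in>insert s0 (Domain A). Q (BB s))"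
    using prob_X_all[of "insert s0 (Domain A)" BB] assms(1) by (simp add: finite_Domain)
  also have "\<dots> = Q (BB s0) * (\<Prod>s\<in>Domain A. Q (BB s))"
    using assms(1,3) by (simp add: finite_Domain)
  also have "\<dots> = Q B * (\<Prod>s\<in>Domain A. Q (A `` {s}))"
    using BB by (simp cong: prod.cong)
  finally show ?thesis using prod_Domain_Q[OF assms(2,1)] by simp
qed

lemma q_nonneg: "0 \<le> q v"
  by (simp add: q_def Q_def)

lemma path_weight_nonneg: "0 \<le> path_weight js"
  unfolding path_weight_def by (induction js) (auto simp: q_nonneg)

lemma visit_prob_nonneg: "0 \<le> visit_prob a m"
  unfolding visit_prob_def by (intro sum_nonneg path_weight_nonneg)

lemma prod_path_constraints:
  "jump_path a js \<Longrightarrow> (\<Prod>p\<in>path_constraints b a js. q (snd p)) = path_weight js"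
proof (induction js arbitrary: a)
  case (Cons j js)
  then show ?case
    using path_constraints_notin[OF Cons.prems] by (simp add: path_weight_def)
qed (simp add: path_weight_def)

lemma cylinder_path_constraints:
  "cylinder (path_constraints b a js) = {\<omega> \<in> space M. follows (\<lambda>i. X (b, i) \<omega>) a js}"
proof -
  have "(\<forall>p\<in>path_constraints b a js. X (fst p) \<omega> = snd p) \<longleftrightarrow> follows (\<lambda>i. X (b, i) \<omega>) a js" for \<omega>
    by (induction js arbitrary: a) auto
  then show ?thesis unfolding cylinder_def by blast
qed

lemma prob_follows:
  "jump_path a js \<Longrightarrow> prob (cylinder (path_constraints b a js)) = path_weight js"
  using prob_cylinder single_valued_path_constraints prod_path_constraints by simp

section \<open>Visit probabilities\<close>

lemma sum_path_weight_le_1: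
  assumes "finite S" "\<And>js. js \<in> S \<Longrightarrow> jump_path a js"
    and "\<And>xs ys z. xs \<in> S \<Longrightarrow> ys \<in> S \<Longrightarrow> follows z a xs \<Longrightarrow> follows z a ys \<Longrightarrow> xs = ys"
  shows "(\<Sum>js\<in>S. path_weight js) \<le> 1"
proof -
  have "(\<Sum>js\<in>S. path_weight js) = (\<Sum>js\<in>S. prob (cylinder (path_constraints True a js)))"
    by (rule sum.cong[OF refl], rule prob_follows[OF assms(2), symmetric])
  also have "\<dots> = prob (\<Union>js\<in>S. cylinder (path_constraints True a js))"
  proof (rule measure_finite_Union[symmetric, OF assms(1)])
    show "(\<lambda>js. cylinder (path_constraints True a js)) ` S \<subseteq> sets M"
      using sets_cylinder finite_path_constraints by blast
    show "disjoint_family_on (\<lambda>js. cylinder (path_constraints True a js)) S"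
      unfolding disjoint_family_on_def cylinder_path_constraints using assms(3) by blast
  qed (simp add: emeasure_eq_measure)
  also have "\<dots> \<le> 1" by simp
  finally show ?thesis .
qed

lemma Q_nonneg: "0 \<le> Q B" and Q_le_1: "Q B \<le> 1"
  by (simp_all add: Q_def)

lemma sum_q_le_Q:
  assumes "finite S" "S \<subseteq> B"
  shows "(\<Sum>v\<in>S. q v) \<le> Q B"
proof -
  have meas: "{\<omega> \<in> space M. Zs 0 \<omega> \<in> C} \<in> sets M" for C
    using sets_X[of "(True, 0)" C] by simp
  have "(\<Sum>v\<in>S. q v) = prob (\<Union>v\<in>S. {\<omega> \<in> space M. Zs 0 \<omega> \<in> {v}})"
    unfolding q_def Q_def
  proof (rule measure_finite_Union[symmetric, OF assms(1)])
    show "(\<lambda>v. {\<omega> \<in> space M. Zs 0 \<omega> \<in> {v}}) ` S \<subseteq> sets M" using meas by blast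
    show "disjoint_family_on (\<lambda>v. {\<omega> \<in> space M. Zs 0 \<omega> \<in> {v}}) S"
      by (auto simp: disjoint_family_on_def)
  qed (simp add: emeasure_eq_measure)
  also have "\<dots> \<le> Q B"
    unfolding Q_def using assms(2) by (intro finite_measure_mono meas) auto
  finally show ?thesis .
qed

lemma Q_tail_tendsto_0: "(\<lambda>t. Q {t..}) \<longlonglongrightarrow> 0"
proof -
  define A where "A t = {\<omega> \<in> space M. Zs 0 \<omega> \<in> {t..}}" for t
  have "A t \<in> sets M" for t
    unfolding A_def using sets_X[of "(True, 0)" "{t..}"] by simp
  then have "(\<lambda>t. measure M (A t)) \<longlonglongrightarrow> measure M (\<Inter>t. A t)"
    by (intro finite_Lim_measure_decseq) (auto simp: A_def decseq_def)
  moreover have "\<omega> \<notin> A (Suc (Zs 0 \<omega>))" for \<omega>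
    unfolding A_def by simp
  then have "(\<Inter>t. A t) = {}" by blast
  ultimately show ?thesis unfolding A_def Q_def by simp
qed

lemma r_nonneg: "0 \<le> r k" and r_le_1: "r k \<le> 1"
  by (simp_all add: r_def)

lemma visit_prob_eq_r: "visit_prob (int k) 0 = r k"
proof -
  define S where "S = {js. jump_path (int k) js \<and> path_end (int k) js = 0}"
  have eq: "{\<omega> \<in> space M. 0 \<in> TZset (\<lambda>i. Zs i \<omega>) (int k)} = (\<Union>js\<in>S. cylinder (path_constraints True (int k) js))"
  proof (intro equalityI subsetI)
    fix \<omega> assume "\<omega> \<in> {\<omega> \<in> space M. 0 \<in> TZset (\<lambda>i. Zs i \<omega>) (int k)}"
    then obtain l where om: "\<omega> \<in> space M" and l: "walk (\<lambda>i. Zs i \<omega>) (int k) l = 0"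
      by (auto simp: TZset_def inTZ_iff_walk)
    have "\<forall>i. 1 \<le> Zs i \<omega>" using posZ by simp
    then have "walk_path (\<lambda>i. Zs i \<omega>) (int k) l \<in> S"
      unfolding S_def using l by (simp add: jump_path_walk_path)
    moreover have "\<omega> \<in> cylinder (path_constraints True (int k) (walk_path (\<lambda>i. Zs i \<omega>) (int k) l))"
      unfolding cylinder_path_constraints using om by (simp add: follows_walk_path)
    ultimately show "\<omega> \<in> (\<Union>js\<in>S. cylinder (path_constraints True (int k) js))" by blast
  next
    fix \<omega> assume "\<omega> \<in> (\<Union>js\<in>S. cylinder (path_constraints True (int k) js))"
    then show "\<omega> \<in> {\<omega> \<in> space M. 0 \<in> TZset (\<lambda>i. Zs i \<omega>) (int k)}"
      unfolding S_def cylinder_path_constraints TZset_def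
      using inTZ_follows[of "int k" _ "\<lambda>i. Zs i \<omega>"] by fastforce
  qed
  have "r k = (\<Sum>js\<in>S. prob (cylinder (path_constraints True (int k) js)))"
    unfolding r_def eq
  proof (rule measure_finite_Union)
    show "finite S" unfolding S_def by (rule finite_jump_paths_to)
    show "(\<lambda>js. cylinder (path_constraints True (int k) js)) ` S \<subseteq> sets M"
      using sets_cylinder finite_path_constraints by blast
    show "disjoint_family_on (\<lambda>js. cylinder (path_constraints True (int k) js)) S"
      unfolding disjoint_family_on_def cylinder_path_constraints S_def
      using follows_landing by fastforce
  qed (simp add: emeasure_eq_measure)
  also have "\<dots> = visit_prob (int k) 0"
    unfolding visit_prob_def S_def using prob_follows by simp
  finally show ?thesis by simp
qed

lemma visit_prob_eq_r_diff: "0 \<le> m \<Longrightarrow> m \<le> a \<Longrightarrow> visit_prob a m = r (nat (a - m))"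
  using visit_prob_eq_r[of "nat (a - m)"] jump_path_to_shift[of m a]
  by (simp add: visit_prob_def)

lemma sum_visit_prob_landing_le_1:
  assumes "finite S" "\<And>m. m \<in> S \<Longrightarrow> m \<le> 0"
  shows "(\<Sum>m\<in>S. visit_prob a m) \<le> 1"
proof -
  define P where "P m = {js. jump_path a js \<and> path_end a js = m}" for m
  have "(\<Sum>m\<in>S. visit_prob a m) = (\<Sum>js\<in>(\<Union>m\<in>S. P m). path_weight js)"
    unfolding visit_prob_def P_def
    by (rule sum.UNION_disjoint[symmetric]) (auto simp: assms(1) finite_jump_paths_to)
  also have "\<dots> \<le> 1"
    using assms follows_landing
    by (intro sum_path_weight_le_1) (auto simp: P_def finite_jump_paths_to)
  finally show ?thesis .
qed

lemma visit_prob_last_jump: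
  assumes "1 \<le> b" "m \<le> 0"
  shows "visit_prob b m \<le> (\<Sum>k\<in>{1..b}. visit_prob b k * q (nat (k - m)))"
proof -
  define f where "f = (\<lambda>(k::int, js). js @ [nat (k - m)])"
  define S where "S = (SIGMA k:{1..b}. {js. jump_path b js \<and> path_end b js = k})"
  have finS: "finite S" unfolding S_def using finite_jump_paths_to by auto
  have "{js. jump_path b js \<and> path_end b js = m} \<subseteq> f ` S"
  proof
    fix js assume "js \<in> {js. jump_path b js \<and> path_end b js = m}"
    then obtain k js' where "js = js' @ [nat (k - m)]" "1 \<le> k" "k \<le> b" "jump_path b js'" "path_end b js' = k"
      using jump_path_last_jump[OF assms] by blast
    then show "js \<in> f ` S" unfolding f_def S_def by (auto intro!: image_eqI[of _ _ "(k, js')"])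
  qed
  then have "visit_prob b m \<le> (\<Sum>js\<in>f ` S. path_weight js)"
    unfolding visit_prob_def
    by (rule sum_mono2[OF finite_imageI[OF finS]]) (simp add: path_weight_nonneg)
  also have "\<dots> \<le> (\<Sum>x\<in>S. path_weight (f x))"
    using sum_image_le[OF finS, of path_weight f] path_weight_nonneg by (simp add: comp_def)
  also have "\<dots> = (\<Sum>k\<in>{1..b}. \<Sum>js | jump_path b js \<and> path_end b js = k. path_weight js * q (nat (k - m)))"
    unfolding S_def f_def using finite_jump_paths_to
    by (subst sum.Sigma) (auto simp: path_weight_def split_beta intro!: sum.cong)
  also have "\<dots> = (\<Sum>k\<in>{1..b}. visit_prob b k * q (nat (k - m)))"
    unfolding visit_prob_def by (simp add: sum_distrib_right)
  finally show ?thesis .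
qed

lemma sum_q_shift_le_Q:
  assumes "finite S" "\<And>k. k \<in> S \<Longrightarrow> m + int t \<le> k"
  shows "(\<Sum>k\<in>S. q (nat (k - m))) \<le> Q {t..}"
proof -
  have "inj_on (\<lambda>k. nat (k - m)) S"
  proof (rule inj_onI)
    fix k k' assume "k \<in> S" "k' \<in> S" "nat (k - m) = nat (k' - m)"
    then show "k = k'" using assms(2)[of k] assms(2)[of k'] by linarith
  qed
  then have "(\<Sum>k\<in>S. q (nat (k - m))) = (\<Sum>v\<in>(\<lambda>k. nat (k - m)) ` S. q v)"
    by (simp add: sum.reindex)
  also have "\<dots> \<le> Q {t..}"
  proof (rule sum_q_le_Q)
    have "t \<le> nat (k - m)" if "k \<in> S" for k
      using assms(2)[OF that] by linarith
    then show "(\<lambda>k. nat (k - m)) ` S \<subseteq> {t..}" by auto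
  qed (use assms(1) in simp)
  finally show ?thesis .
qed

lemma visit_prob_landing_le:
  assumes r: "\<And>k. N \<le> k \<Longrightarrow> r k \<le> e" and e: "0 \<le> e"
    and b: "int T + int N \<le> b" "1 \<le> b" and m: "m \<le> 0"
  shows "visit_prob b m \<le> e + Q {T..}"
proof -
  have visit_le: "visit_prob b k * q (nat (k - m))
      \<le> e * q (nat (k - m)) + (if int T \<le> k then q (nat (k - m)) else 0)" if k: "k \<in> {1..b}" for k
  proof (cases "int N \<le> b - k")
    case True
    then have "visit_prob b k \<le> e"
      using k visit_prob_eq_r_diff[of k b] r[of "nat (b - k)"] by auto
    then have "visit_prob b k * q (nat (k - m)) \<le> e * q (nat (k - m))"
      by (rule mult_right_mono) (rule q_nonneg)
    then show ?thesis using q_nonneg[of "nat (k - m)"] by auto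
  next
    case False
    have "visit_prob b k \<le> 1" using k visit_prob_eq_r_diff[of k b] r_le_1 by auto
    then have "visit_prob b k * q (nat (k - m)) \<le> q (nat (k - m))"
      using visit_prob_nonneg q_nonneg by (intro mult_left_le_one_le)
    moreover have "int T \<le> k" using False b by linarith
    ultimately show ?thesis using mult_nonneg_nonneg[OF e q_nonneg[of "nat (k - m)"]] by auto
  qed
  have "visit_prob b m \<le> (\<Sum>k\<in>{1..b}. visit_prob b k * q (nat (k - m)))"
    by (rule visit_prob_last_jump[OF b(2) m])
  also have "\<dots> \<le> (\<Sum>k\<in>{1..b}. e * q (nat (k - m)) + (if int T \<le> k then q (nat (k - m)) else 0))"
    by (rule sum_mono) (rule visit_le)
  also have "\<dots> = e * (\<Sum>k\<in>{1..b}. q (nat (k - m))) + (\<Sum>k\<in>{k \<in> {1..b}. int T \<le> k}. q (nat (k - m)))"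
    by (simp only: sum.distrib sum_distrib_left sum.inter_filter[OF finite_atLeastAtMost_int])
  also have "\<dots> \<le> e * Q {0..} + Q {T..}"
  proof (intro add_mono mult_left_mono e)
    show "(\<Sum>k\<in>{1..b}. q (nat (k - m))) \<le> Q {0..}"
      using m by (intro sum_q_shift_le_Q) auto
    have "finite {k \<in> {1..b}. int T \<le> k}" by (rule finite_subset[of _ "{1..b}"]) auto
    then show "(\<Sum>k\<in>{k \<in> {1..b}. int T \<le> k}. q (nat (k - m))) \<le> Q {T..}"
      using m by (intro sum_q_shift_le_Q) auto
  qed
  also have "\<dots> \<le> e + Q {T..}"
    using mult_left_le[OF Q_le_1 e] by simp
  finally show ?thesis .
qed

lemma visit_prob_landing_small:
  assumes sq: "summable (\<lambda>k. r k ^ 2)" and e: "0 < e"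
  obtains A where "\<And>b m. A \<le> b \<Longrightarrow> m \<le> 0 \<Longrightarrow> visit_prob b m \<le> e"
proof -
  have "\<forall>\<^sub>F k in sequentially. r k < e / 2"
    using summable_square_tendsto_0[OF sq] e by (intro order_tendstoD(2)) auto
  then obtain N where N: "\<And>k. N \<le> k \<Longrightarrow> r k \<le> e / 2"
    unfolding eventually_sequentially by (meson less_imp_le)
  have "\<forall>\<^sub>F t in sequentially. Q {t..} < e / 2"
    using Q_tail_tendsto_0 e by (intro order_tendstoD(2)) auto
  then obtain T where T: "Q {T..} \<le> e / 2"
    unfolding eventually_sequentially by (meson less_imp_le order_refl)
  have "visit_prob b m \<le> e" if "int T + int N + 1 \<le> b" "m \<le> 0" for b m
  proof -
    have "visit_prob b m \<le> e / 2 + Q {T..}"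
      by (rule visit_prob_landing_le[where N = N]) (use N that e in auto)
    then show ?thesis using T by simp
  qed
  then show ?thesis using that by blast
qed

(* Sites b - i >= 1 contribute r(i + a - b) r(i), handled by shifted_products_small; at landing
   sites the factor for the walk from b is small, and the walk from a lands only once. *)
lemma meeting_sum_small:
  assumes sq: "summable (\<lambda>k. r k ^ 2)" and e: "0 < e"
  obtains A D where "1 \<le> A"
    "\<And>a b N. A \<le> b \<Longrightarrow> b + int D \<le> a \<Longrightarrow> (\<Sum>i<N. visit_prob a (b - int i) * visit_prob b (b - int i)) \<le> e"
proof -
  obtain D where D: "\<And>d I. D \<le> d \<Longrightarrow> finite I \<Longrightarrow> (\<Sum>i\<in>I. r (i + d) * r i) \<le> e / 2"
    using shifted_products_small[OF sq r_nonneg r_le_1, of "e / 2"] e by auto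
  obtain A0 where A0: "\<And>b m. A0 \<le> b \<Longrightarrow> m \<le> 0 \<Longrightarrow> visit_prob b m \<le> e / 2"
    using visit_prob_landing_small[OF sq, of "e / 2"] e by auto
  define A where "A = max 1 A0"
  have meeting: "(\<Sum>i<N. visit_prob a (b - int i) * visit_prob b (b - int i)) \<le> e"
    if b: "A \<le> b" "b + int D \<le> a" for a b N
  proof -
    define f where "f i = visit_prob a (b - int i) * visit_prob b (b - int i)" for i
    define I where "I = {i. i < N \<and> int i < b}"
    have "f i = r (i + nat (a - b)) * r i" if "i \<in> I" for i
    proof -
      have "0 \<le> b - int i" "b - int i \<le> a" "b - int i \<le> b" using that b by (auto simp: I_def)
      then have "f i = r (nat (a - (b - int i))) * r (nat (b - (b - int i)))"
        unfolding f_def by (simp add: visit_prob_eq_r_diff)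
      moreover have "nat (a - (b - int i)) = i + nat (a - b)" using b by auto
      ultimately show ?thesis by simp
    qed
    then have "(\<Sum>i\<in>I. f i) = (\<Sum>i\<in>I. r (i + nat (a - b)) * r i)"
      by (rule sum.cong[OF refl])
    also have "\<dots> \<le> e / 2" using D[of "nat (a - b)" I] b by (simp add: I_def)
    finally have site_pos: "(\<Sum>i\<in>I. f i) \<le> e / 2" .
    have "(\<Sum>i\<in>{..<N} - I. f i) \<le> (\<Sum>i\<in>{..<N} - I. visit_prob a (b - int i) * (e / 2))"
      using A0 b visit_prob_nonneg unfolding f_def
      by (intro sum_mono mult_left_mono) (auto simp: I_def A_def)
    also have "\<dots> = (\<Sum>m\<in>(\<lambda>i. b - int i) ` ({..<N} - I). visit_prob a m) * (e / 2)"
      by (simp add: sum_distrib_right sum.reindex inj_on_def)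
    also have "\<dots> \<le> 1 * (e / 2)"
      using e by (intro mult_right_mono sum_visit_prob_landing_le_1) (auto simp: I_def)
    finally have "(\<Sum>i\<in>{..<N} - I. f i) \<le> e / 2" by simp
    with site_pos show ?thesis
      using sum.Int_Diff[of "{..<N}" f I] unfolding f_def
      by (simp add: Int_absorb1 I_def subset_eq)
  qed
  show ?thesis by (rule that[of A D]) (use meeting in \<open>auto simp: A_def\<close>)
qed

section \<open>Bad events\<close>

lemma sum_path_weight_paths_from_le_1: "(\<Sum>zs\<in>paths_from n c l. path_weight zs) \<le> 1"
  by (rule sum_path_weight_le_1[OF finite_paths_from]) (auto simp: paths_from_def intro: follows_same_length)

definition big_jump_event :: "int \<Rightarrow> nat \<Rightarrow> nat \<Rightarrow> 'a set" where
  "big_jump_event n L t = (\<Union>k<L. \<Union>zs\<in>paths_from n 1 k.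
     cylinder (path_constraints True n zs) \<inter> {\<omega> \<in> space M. X (True, nat (path_end n zs)) \<omega> \<in> {t..}})"

lemma sets_big_jump_event: "big_jump_event n L t \<in> sets M"
  unfolding big_jump_event_def
  by (rule sets.finite_UN[OF finite_lessThan], rule sets.finite_UN[OF finite_paths_from],
      rule sets.Int[OF sets_cylinder[OF finite_path_constraints] sets_X])

lemma prob_big_jump_event: "prob (big_jump_event n L t) \<le> real L * Q {t..}"
proof -
  define E where "E zs = cylinder (path_constraints True n zs) \<inter> {\<omega> \<in> space M. X (True, nat (path_end n zs)) \<omega> \<in> {t..}}" for zs
  have sets_E: "E zs \<in> sets M" for zs
    unfolding E_def by (intro sets.Int sets_cylinder sets_X finite_path_constraints)
  have prob_E: "prob (E zs) = path_weight zs * Q {t..}" if "zs \<in> paths_from n 1 k" for zs k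
  proof -
    from that have zs: "jump_path n zs" "1 \<le> path_end n zs" by (auto simp: paths_from_def)
    have "(True, nat (path_end n zs)) \<notin> Domain (path_constraints True n zs)"
      unfolding Domain_path_constraints using jump_path_sites[OF zs(1)] zs(2) by force
    then have "prob (E zs) = (\<Prod>p\<in>path_constraints True n zs. q (snd p)) * Q {t..}"
      unfolding E_def by (rule prob_cylinder_X[OF finite_path_constraints single_valued_path_constraints[OF zs(1)]])
    then show ?thesis using prod_path_constraints[OF zs(1)] by simp
  qed
  have "prob (big_jump_event n L t) \<le> (\<Sum>k<L. prob (\<Union>zs\<in>paths_from n 1 k. E zs))"
    unfolding big_jump_event_def E_def[symmetric]
    using sets_E finite_paths_from by (intro finite_measure_subadditive_finite) auto
  also have "\<dots> \<le> (\<Sum>k<L. Q {t..})"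
  proof (rule sum_mono)
    fix k
    have "prob (\<Union>zs\<in>paths_from n 1 k. E zs) \<le> (\<Sum>zs\<in>paths_from n 1 k. prob (E zs))"
      using sets_E finite_paths_from by (intro finite_measure_subadditive_finite) auto
    also have "\<dots> = (\<Sum>zs\<in>paths_from n 1 k. path_weight zs) * Q {t..}"
      using prob_E by (simp add: sum_distrib_right)
    also have "\<dots> \<le> Q {t..}"
      by (intro mult_left_le_one_le Q_nonneg sum_nonneg path_weight_nonneg sum_path_weight_paths_from_le_1)
    finally show "prob (\<Union>zs\<in>paths_from n 1 k. E zs) \<le> Q {t..}" .
  qed
  finally show ?thesis by simp
qed

lemma prob_cylinder_path_and_two_W_paths:
  assumes "jump_path n zs" "jump_path a xs" "jump_path b ys" "path_sites a xs \<inter> path_sites b ys = {}"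
  shows "prob (cylinder (path_constraints True n zs \<union> path_constraints False a xs \<union> path_constraints False b ys))
    = path_weight zs * path_weight xs * path_weight ys"
proof -
  define Cz Cx Cy where "Cz = path_constraints True n zs" and "Cx = path_constraints False a xs"
    and "Cy = path_constraints False b ys"
  have "x = y" if "x \<in> path_sites a xs" "y \<in> path_sites b ys" "nat x = nat y" for x y
    using jump_path_sites[OF assms(2) that(1)] jump_path_sites[OF assms(3) that(2)] that(3)
    by (metis eq_nat_nat_iff order.trans zero_le_one)
  then have dom_xy: "Domain Cx \<inter> Domain Cy = {}"
    unfolding Cx_def Cy_def Domain_path_constraints using assms(4) by auto
  have dom_z: "Domain Cz \<inter> Domain (Cx \<union> Cy) = {}"
    unfolding Cx_def Cy_def Cz_def Domain_Un_eq Domain_path_constraints by auto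
  have "single_valued (Cz \<union> (Cx \<union> Cy))"
    unfolding Cx_def Cy_def Cz_def using assms dom_xy dom_z
    by (intro single_valued_Un single_valued_path_constraints) (auto simp: Cx_def Cy_def Cz_def)
  moreover have "Cz \<inter> (Cx \<union> Cy) = {}" "Cx \<inter> Cy = {}"
    using dom_xy dom_z by auto
  ultimately show ?thesis
    using prob_cylinder[of "Cz \<union> (Cx \<union> Cy)"] prod_path_constraints assms
    unfolding Cx_def Cy_def Cz_def by (simp add: prod.union_disjoint Un_assoc)
qed

definition meeting_at :: "int \<Rightarrow> nat list \<Rightarrow> int \<Rightarrow> int \<Rightarrow> int \<Rightarrow> 'a set" where
  "meeting_at n zs a b m = (\<Union>p\<in>meeting_pairs a b m.
     cylinder (path_constraints True n zs \<union> path_constraints False a (fst p) \<union> path_constraints False b (snd p)))"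

lemma sets_meeting_at: "meeting_at n zs a b m \<in> sets M"
  unfolding meeting_at_def using finite_meeting_pairs
  by (intro sets.finite_UN sets_cylinder) auto

lemma prob_meeting_at:
  assumes "jump_path n zs"
  shows "prob (meeting_at n zs a b m) \<le> path_weight zs * (visit_prob a m * visit_prob b m)"
proof -
  let ?P = "{xs. jump_path a xs \<and> path_end a xs = m} \<times> {ys. jump_path b ys \<and> path_end b ys = m}"
  have "prob (meeting_at n zs a b m) \<le> (\<Sum>p\<in>meeting_pairs a b m.
      prob (cylinder (path_constraints True n zs \<union> path_constraints False a (fst p) \<union> path_constraints False b (snd p))))"
    unfolding meeting_at_def
    by (rule finite_measure_subadditive_finite[OF finite_meeting_pairs]) (auto intro!: sets_cylinder)
  also have "\<dots> = (\<Sum>p\<in>meeting_pairs a b m. path_weight zs * (path_weight (fst p) * path_weight (snd p)))"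
    using prob_cylinder_path_and_two_W_paths[OF assms]
    by (intro sum.cong) (auto simp: meeting_pairs_def mult.assoc)
  also have "\<dots> \<le> (\<Sum>p\<in>?P. path_weight zs * (path_weight (fst p) * path_weight (snd p)))"
    using finite_jump_paths_to path_weight_nonneg
    by (intro sum_mono2) (auto simp: meeting_pairs_def)
  also have "\<dots> = path_weight zs * (\<Sum>p\<in>?P. path_weight (fst p) * path_weight (snd p))"
    by (simp add: sum_distrib_left)
  also have "(\<Sum>p\<in>?P. path_weight (fst p) * path_weight (snd p)) = visit_prob a m * visit_prob b m"
    unfolding visit_prob_def by (simp add: sum_product sum.cartesian_product split_beta)
  finally show ?thesis .
qed

lemma emeasure_meeting_after_path:
  assumes zs: "jump_path n zs" and b: "b = path_end n zs"
    and \<delta>: "\<And>N. (\<Sum>i<N. visit_prob a (b - int i) * visit_prob b (b - int i)) \<le> \<delta>"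
  shows "emeasure M (\<Union>i. meeting_at n zs a b (b - int i)) \<le> ennreal (path_weight zs * \<delta>)"
proof -
  have "emeasure M (\<Union>i. meeting_at n zs a b (b - int i)) \<le> (\<Sum>i. emeasure M (meeting_at n zs a b (b - int i)))"
    using sets_meeting_at by (intro emeasure_subadditive_countably) auto
  also have "\<dots> \<le> ennreal (path_weight zs * \<delta>)"
  proof (rule suminf_le_const[OF summableI])
    fix N
    have "(\<Sum>i<N. emeasure M (meeting_at n zs a b (b - int i)))
        \<le> (\<Sum>i<N. ennreal (path_weight zs * (visit_prob a (b - int i) * visit_prob b (b - int i))))"
      using prob_meeting_at[OF zs] by (intro sum_mono) (simp add: emeasure_eq_measure ennreal_leI)
    also have "\<dots> = ennreal (path_weight zs * (\<Sum>i<N. visit_prob a (b - int i) * visit_prob b (b - int i)))"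
      by (subst sum_ennreal) (auto simp: path_weight_nonneg visit_prob_nonneg sum_distrib_left)
    also have "\<dots> \<le> ennreal (path_weight zs * \<delta>)"
      using \<delta> by (intro ennreal_leI mult_left_mono path_weight_nonneg)
    finally show "(\<Sum>i<N. emeasure M (meeting_at n zs a b (b - int i))) \<le> ennreal (path_weight zs * \<delta>)" .
  qed
  finally show ?thesis .
qed

definition meeting_event :: "int \<Rightarrow> int \<Rightarrow> nat \<Rightarrow> nat \<Rightarrow> 'a set" where
  "meeting_event n A l1 l2 = (\<Union>zs\<in>paths_from n A l2. \<Union>i.
     meeting_at n zs (path_end n (take l1 zs)) (path_end n zs) (path_end n zs - int i))"

lemma sets_meeting_event: "meeting_event n A l1 l2 \<in> sets M"
  unfolding meeting_event_def
  by (rule sets.finite_UN[OF finite_paths_from], rule sets.countable_UN) (auto intro: sets_meeting_at)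

lemma prob_meeting_event:
  assumes meeting_sum: "\<And>a b N. A \<le> b \<Longrightarrow> b + int D \<le> a \<Longrightarrow>
      (\<Sum>i<N. visit_prob a (b - int i) * visit_prob b (b - int i)) \<le> \<delta>"
    and l: "l1 + D \<le> l2" and \<delta>: "0 \<le> \<delta>"
  shows "prob (meeting_event n A l1 l2) \<le> \<delta>"
proof -
  define E where "E zs = (\<Union>i. meeting_at n zs (path_end n (take l1 zs)) (path_end n zs) (path_end n zs - int i))" for zs
  have sets_E: "E zs \<in> sets M" for zs
    unfolding E_def using sets_meeting_at by (intro sets.countable_UN) auto
  have prob_E: "prob (E zs) \<le> path_weight zs * \<delta>" if "zs \<in> paths_from n A l2" for zs
  proof -
    from that have zs: "jump_path n zs" "length zs = l2" "A \<le> path_end n zs"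
      by (auto simp: paths_from_def)
    have "path_end n zs + int D \<le> path_end n (take l1 zs)"
      using path_end_take_gap[OF zs(1), of l1] zs(2) l by simp
    then have "emeasure M (E zs) \<le> ennreal (path_weight zs * \<delta>)"
      unfolding E_def using zs by (intro emeasure_meeting_after_path meeting_sum) auto
    then show ?thesis
      using \<delta> path_weight_nonneg[of zs] by (simp add: emeasure_eq_measure)
  qed
  have "prob (meeting_event n A l1 l2) \<le> (\<Sum>zs\<in>paths_from n A l2. prob (E zs))"
    unfolding meeting_event_def E_def[symmetric]
    using sets_E finite_paths_from by (intro finite_measure_subadditive_finite) auto
  also have "\<dots> \<le> (\<Sum>zs\<in>paths_from n A l2. path_weight zs) * \<delta>"
    unfolding sum_distrib_right using prob_E by (rule sum_mono)
  also have "\<dots> \<le> \<delta>"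
    using \<delta> by (intro mult_left_le_one_le sum_nonneg path_weight_nonneg sum_path_weight_paths_from_le_1)
  finally show ?thesis .
qed

lemma walk_high_unless_big_jump:
  assumes om: "\<omega> \<in> space M" and no_big: "\<omega> \<notin> big_jump_event n L t" and n: "A + int L * int t \<le> n"
  shows "A \<le> walk (\<lambda>k. Zs k \<omega>) n L"
proof (rule ccontr)
  define z where "z = (\<lambda>k. Zs k \<omega>)"
  assume low: "\<not> A \<le> walk (\<lambda>k. Zs k \<omega>) n L"
  have "\<exists>k<L. 1 \<le> walk z n k \<and> t \<le> z (nat (walk z n k))"
  proof (rule ccontr)
    assume small: "\<not> (\<exists>k<L. 1 \<le> walk z n k \<and> t \<le> z (nat (walk z n k)))"
    have "k \<le> L \<Longrightarrow> n - int k * int t \<le> walk z n k" for k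
    proof (induction k)
      case (Suc k)
      then show ?case
        using small walk_Suc[of z n k] by (cases "1 \<le> walk z n k") (auto simp: algebra_simps)
    qed simp
    from this[of L] show False using low n unfolding z_def by simp
  qed
  then obtain k where k: "k < L" "1 \<le> walk z n k" "t \<le> z (nat (walk z n k))" by blast
  define zs where "zs = walk_path z n k"
  have "\<forall>k'<k. 1 \<le> walk z n k'"
    using k(2) walk_antimono[of _ k z n] by (meson less_imp_le order_trans)
  then have "zs \<in> paths_from n 1 k"
    unfolding paths_from_def zs_def using k(2) posZ
    by (simp add: length_walk_path jump_path_walk_path z_def)
  moreover have "\<omega> \<in> cylinder (path_constraints True n zs) \<inter> {\<omega> \<in> space M. X (True, nat (path_end n zs)) \<omega> \<in> {t..}}"
    unfolding cylinder_path_constraints zs_def using om k(3) by (simp add: follows_walk_path z_def)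
  ultimately have "\<omega> \<in> big_jump_event n L t"
    unfolding big_jump_event_def using k(1) by blast
  with no_big show False ..
qed

(* The W-walks are cut at their first meeting point, so that the two W-paths visit disjoint
   sites as required in meeting_pairs. *)
lemma W_walks_apart_unless_meeting:
  assumes om: "\<omega> \<in> space M" and no_meet: "\<omega> \<notin> meeting_event n A l1 l2"
    and l: "l1 \<le> l2" and A: "1 \<le> A" "A \<le> walk (\<lambda>k. Zs k \<omega>) n l2"
  shows "walk (\<lambda>k. Ws k \<omega>) (walk (\<lambda>k. Zs k \<omega>) n l1) p \<noteq> walk (\<lambda>k. Ws k \<omega>) (walk (\<lambda>k. Zs k \<omega>) n l2) p'"
proof
  define z w where "z = (\<lambda>k. Zs k \<omega>)" and "w = (\<lambda>k. Ws k \<omega>)"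
  define a b where "a = walk z n l1" and "b = walk z n l2"
  assume "walk (\<lambda>k. Ws k \<omega>) (walk (\<lambda>k. Zs k \<omega>) n l1) p = walk (\<lambda>k. Ws k \<omega>) (walk (\<lambda>k. Zs k \<omega>) n l2) p'"
  then obtain i0 j0 where meet: "walk w a i0 = walk w b j0"
    and apart: "path_sites a (walk_path w a i0) \<inter> path_sites b (walk_path w b j0) = {}"
    using walks_first_meeting unfolding z_def w_def a_def b_def by metis
  define zs where "zs = walk_path z n l2"
  have "\<forall>k'<l2. 1 \<le> walk z n k'"
    using A walk_antimono[of _ l2 z n] unfolding z_def by (meson less_imp_le order_trans)
  then have zs_in: "zs \<in> paths_from n A l2"
    unfolding paths_from_def zs_def using A posZ
    by (simp add: length_walk_path jump_path_walk_path z_def)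
  define m where "m = walk w b j0"
  have "m \<le> b" unfolding m_def using walk_antimono[of 0 j0 w b] by simp
  then have m: "m = b - int (nat (b - m))" by simp
  have "(walk_path w a i0, walk_path w b j0) \<in> meeting_pairs a b m"
    unfolding meeting_pairs_def m_def using meet apart posW by (simp add: jump_path_walk_path w_def)
  moreover have "\<omega> \<in> cylinder (path_constraints True n zs \<union> path_constraints False a (walk_path w a i0)
      \<union> path_constraints False b (walk_path w b j0))"
    unfolding cylinder_Un cylinder_path_constraints zs_def using om
    by (simp add: follows_walk_path z_def w_def)
  ultimately have "\<omega> \<in> meeting_at n zs a b m"
    unfolding meeting_at_def by force
  moreover have "path_end n (take l1 zs) = a" "path_end n zs = b"
    unfolding zs_def a_def b_def using l by (simp_all add: take_walk_path)
  ultimately have "\<omega> \<in> meeting_at n zs (path_end n (take l1 zs)) (path_end n zs) (path_end n zs - int (nat (b - m)))"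
    using m by simp
  then have "\<omega> \<in> meeting_event n A l1 l2"
    unfolding meeting_event_def using zs_in by blast
  with no_meet show False ..
qed

lemma Lambda_gt_unless_bad:
  assumes om: "\<omega> \<in> space M" and A: "1 \<le> A" "A + int (K * D) * int t \<le> n"
    and no_big: "\<omega> \<notin> big_jump_event n (K * D) t"
    and no_meet: "\<And>i j. i < j \<Longrightarrow> j \<le> K \<Longrightarrow> \<omega> \<notin> meeting_event n A (i * D) (j * D)"
  shows "K < Lambda (\<lambda>k. Zs k \<omega>) (\<lambda>k. Ws k \<omega>) n"
proof -
  define z w where "z = (\<lambda>k. Zs k \<omega>)" and "w = (\<lambda>k. Ws k \<omega>)"
  define s where "s i = walk z n (i * D)" for i
  define land where "land i = walk w (s i) (nat (s i) + 1)" for i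
  have high: "A \<le> walk z n (K * D)"
    unfolding z_def by (rule walk_high_unless_big_jump[OF om no_big A(2)])
  have land_in: "land i \<in> Tset z w n \<inter> {..0}" for i
  proof -
    have "inT z w n (land i)"
      unfolding land_def s_def using inT_if_inTZ_Z inT_if_inTZ_W inTZ_iff_walk by metis
    moreover have "land i \<le> 0"
      unfolding land_def using posW by (intro walk_lands) (simp add: w_def)
    ultimately show ?thesis by (simp add: Tset_def)
  qed
  have apart: "land i \<noteq> land j" if "i < j" "j \<le> K" for i j
  proof -
    have "A \<le> walk z n (j * D)"
      using high walk_antimono[of "j * D" "K * D" z n] that by simp
    moreover have "i * D \<le> j * D" using that by simp
    ultimately show ?thesis
      using W_walks_apart_unless_meeting[OF om no_meet[OF that] _ A(1)]
      unfolding land_def s_def z_def w_def by blast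
  qed
  have "inj_on land {..K}"
    by (intro inj_onI) (metis apart atMost_iff linorder_cases)
  then have "card {..K} \<le> card (Tset z w n \<inter> {..0})"
    using land_in finite_Tset[of z w n] posZ posW
    by (intro card_inj_on_le) (auto simp: z_def w_def)
  then show ?thesis unfolding Lambda_def z_def w_def by simp
qed

lemma prob_Lambda_le:
  assumes A: "1 \<le> A" "A + int (K * D) * int t \<le> n" and \<delta>: "0 \<le> \<delta>"
    and meeting_sum: "\<And>a b N. A \<le> b \<Longrightarrow> b + int D \<le> a \<Longrightarrow>
      (\<Sum>i<N. visit_prob a (b - int i) * visit_prob b (b - int i)) \<le> \<delta>"
  shows "prob {\<omega> \<in> space M. Lambda (\<lambda>k. Zs k \<omega>) (\<lambda>k. Ws k \<omega>) n \<le> K}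
    \<le> real (K * D) * Q {t..} + real ((K + 1) ^ 2) * \<delta>"
proof -
  define Pairs where "Pairs = {(i, j). i < j \<and> j \<le> K}"
  define E where "E p = meeting_event n A (fst p * D) (snd p * D)" for p
  have fin: "finite Pairs" by (rule finite_subset[of _ "{..K} \<times> {..K}"]) (auto simp: Pairs_def)
  have sets_E: "E p \<in> sets M" for p
    unfolding E_def by (rule sets_meeting_event)
  have "{\<omega> \<in> space M. Lambda (\<lambda>k. Zs k \<omega>) (\<lambda>k. Ws k \<omega>) n \<le> K} \<subseteq> big_jump_event n (K * D) t \<union> (\<Union>p\<in>Pairs. E p)"
  proof
    fix \<omega> assume "\<omega> \<in> {\<omega> \<in> space M. Lambda (\<lambda>k. Zs k \<omega>) (\<lambda>k. Ws k \<omega>) n \<le> K}"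
    then have om: "\<omega> \<in> space M" and le: "Lambda (\<lambda>k. Zs k \<omega>) (\<lambda>k. Ws k \<omega>) n \<le> K" by auto
    show "\<omega> \<in> big_jump_event n (K * D) t \<union> (\<Union>p\<in>Pairs. E p)"
    proof (rule ccontr)
      assume "\<omega> \<notin> big_jump_event n (K * D) t \<union> (\<Union>p\<in>Pairs. E p)"
      then have "\<omega> \<notin> big_jump_event n (K * D) t"
        "\<And>i j. i < j \<Longrightarrow> j \<le> K \<Longrightarrow> \<omega> \<notin> meeting_event n A (i * D) (j * D)"
        unfolding Pairs_def E_def by auto
      then have "K < Lambda (\<lambda>k. Zs k \<omega>) (\<lambda>k. Ws k \<omega>) n" by (rule Lambda_gt_unless_bad[OF om A])
      with le show False by simp
    qed
  qed
  moreover have sets_UE: "(\<Union>p\<in>Pairs. E p) \<in> sets M"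
    using fin sets_E by (rule sets.finite_UN)
  ultimately have "prob {\<omega> \<in> space M. Lambda (\<lambda>k. Zs k \<omega>) (\<lambda>k. Ws k \<omega>) n \<le> K}
      \<le> prob (big_jump_event n (K * D) t \<union> (\<Union>p\<in>Pairs. E p))"
    using sets_big_jump_event by (intro finite_measure_mono sets.Un)
  also have "\<dots> \<le> prob (big_jump_event n (K * D) t) + prob (\<Union>p\<in>Pairs. E p)"
    using sets_big_jump_event sets_UE by (rule measure_Un_le)
  also have "prob (\<Union>p\<in>Pairs. E p) \<le> (\<Sum>p\<in>Pairs. prob (E p))"
    using fin by (rule finite_measure_subadditive_finite) (use sets_E in blast)
  also have "\<dots> \<le> (\<Sum>p\<in>Pairs. \<delta>)"
  proof (rule sum_mono)
    fix p assume "p \<in> Pairs"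
    then have "Suc (fst p) * D \<le> snd p * D"
      unfolding Pairs_def by (intro mult_le_mono1) auto
    then have "fst p * D + D \<le> snd p * D" by simp
    then show "prob (E p) \<le> \<delta>"
      unfolding E_def using prob_meeting_event[OF meeting_sum _ \<delta>] by blast
  qed
  also have "\<dots> = real (card Pairs) * \<delta>" by simp
  also have "\<dots> \<le> real ((K + 1) ^ 2) * \<delta>"
  proof (rule mult_right_mono[OF _ \<delta>])
    have "card Pairs \<le> card ({..K} \<times> {..K})"
      by (intro card_mono) (auto simp: Pairs_def)
    then have "card Pairs \<le> (K + 1) ^ 2" by (simp add: power2_eq_square)
    then show "real (card Pairs) \<le> real ((K + 1) ^ 2)" by (simp only: of_nat_le_iff)
  qed
  also have "prob (big_jump_event n (K * D) t) \<le> real (K * D) * Q {t..}"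
    by (rule prob_big_jump_event)
  finally show ?thesis by simp
qed

lemma prob_Lambda_le_tendsto_0:
  assumes sq: "summable (\<lambda>k. r k ^ 2)"
  shows "(\<lambda>n::nat. prob {\<omega> \<in> space M. Lambda (\<lambda>k. Zs k \<omega>) (\<lambda>k. Ws k \<omega>) (int n) \<le> K}) \<longlonglongrightarrow> 0"
proof (rule LIMSEQ_I)
  fix \<epsilon> :: real assume \<epsilon>: "0 < \<epsilon>"
  define \<delta> where "\<delta> = \<epsilon> / (4 * real ((K + 1) ^ 2))"
  have \<delta>: "0 < \<delta>" using \<epsilon> by (simp add: \<delta>_def)
  obtain A D where A: "1 \<le> A" and meeting_sum: "\<And>a b N. A \<le> b \<Longrightarrow> b + int D \<le> a \<Longrightarrow>
      (\<Sum>i<N. visit_prob a (b - int i) * visit_prob b (b - int i)) \<le> \<delta>"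
    using meeting_sum_small[OF sq \<delta>] by blast
  define L where "L = K * D"
  have "\<forall>\<^sub>F t in sequentially. Q {t..} < \<epsilon> / (4 * (real L + 1))"
    using Q_tail_tendsto_0 \<epsilon> by (intro order_tendstoD(2)) auto
  then obtain t where t: "Q {t..} \<le> \<epsilon> / (4 * (real L + 1))"
    unfolding eventually_sequentially by (meson less_imp_le order_refl)
  have "real L * Q {t..} \<le> real L * (\<epsilon> / (4 * (real L + 1)))"
    using t by (intro mult_left_mono) auto
  also have "\<dots> \<le> \<epsilon> / 4"
    using \<epsilon> by (simp add: field_simps)
  finally have big: "real L * Q {t..} \<le> \<epsilon> / 4" .
  have meet: "real ((K + 1) ^ 2) * \<delta> = \<epsilon> / 4"
    unfolding \<delta>_def by simp
  show "\<exists>n0. \<forall>n\<ge>n0. norm (prob {\<omega> \<in> space M. Lambda (\<lambda>k. Zs k \<omega>) (\<lambda>k. Ws k \<omega>) (int n) \<le> K} - 0) < \<epsilon>"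
  proof (intro exI allI impI)
    fix n assume "nat (A + int L * int t) \<le> n"
    then have "A + int (K * D) * int t \<le> int n" using A unfolding L_def by linarith
    from prob_Lambda_le[OF A(1) this less_imp_le[OF \<delta>] meeting_sum]
    have "prob {\<omega> \<in> space M. Lambda (\<lambda>k. Zs k \<omega>) (\<lambda>k. Ws k \<omega>) (int n) \<le> K} \<le> \<epsilon> / 2"
      using big meet unfolding L_def by linarith
    then show "norm (prob {\<omega> \<in> space M. Lambda (\<lambda>k. Zs k \<omega>) (\<lambda>k. Ws k \<omega>) (int n) \<le> K} - 0) < \<epsilon>"
      using \<epsilon> by simp
  qed
qed

end

theorem theorem6:
  fixes M :: "'a measure" and Zs Ws :: "nat \<Rightarrow> 'a \<Rightarrow> nat"
  assumes P: "prob_space M"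
    and indep: "prob_space.indep_vars M (\<lambda>_. count_space UNIV)
                  (\<lambda>(b, i). if b then Zs i else Ws i) (UNIV :: (bool \<times> nat) set)"
    and distZ: "\<And>i. distr M (count_space UNIV) (Zs i) = distr M (count_space UNIV) (Zs 0)"
    and distW: "\<And>i. distr M (count_space UNIV) (Ws i) = distr M (count_space UNIV) (Zs 0)"
    and posZ: "\<And>i \<omega>. Zs i \<omega> \<ge> 1"
    and posW: "\<And>i \<omega>. Ws i \<omega> \<ge> 1"
    and infmean: "(\<integral>\<^sup>+ \<omega>. ennreal (real (min (Zs 0 \<omega>) (Ws 0 \<omega>))) \<partial>M) = \<infinity>"
    and sq: "summable (\<lambda>n::nat. (measure M {\<omega> \<in> space M. 0 \<in> TZset (\<lambda>k. Zs k \<omega>) (int n)}) ^ 2)"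
  shows "\<forall>K::nat. (\<lambda>n::nat. measure M {\<omega> \<in> space M. Lambda (\<lambda>k. Zs k \<omega>) (\<lambda>k. Ws k \<omega>) (int n) \<le> K})
            \<longlonglongrightarrow> 0"
proof
  fix K :: nat
  interpret iid_jumps M Zs Ws
    using P indep distZ distW posZ posW by (rule iid_jumps.intro)
  show "(\<lambda>n. prob {\<omega> \<in> space M. Lambda (\<lambda>k. Zs k \<omega>) (\<lambda>k. Ws k \<omega>) (int n) \<le> K}) \<longlonglongrightarrow> 0"
    using sq by (intro prob_Lambda_le_tendsto_0) (simp add: r_def)
qed

end
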